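(* Let $\varphi:\Lambda\to\Gamma$ be a regular covering map of finite simplicial graphs, and let $u,u'$ be vertices of $\Lambda$ with $\mathrm{lk}(u)\subseteq\mathrm{st}(u')$ and $\varphi(u)=\varphi(u')$. If $u$ is not an isolated vertex, then $u=u'$. Otherwise, $u'$ is also an isolated vertex.
   Context: Graphs are finite simplicial graphs; $\mathrm{lk}(u)$ is the subgraph induced by the neighbours of $u$ and $\mathrm{st}(u)$ the subgraph induced by $\mathrm{lk}(u)\cup\{u\}$. A covering map $\varphi:\Lambda\to\Gamma$ is a surjective simplicial map mapping the neighbours of each vertex $u$ bijectively onto the neighbours of $\varphi(u)$; regular means the group of graph automorphisms $\mu$ of $\Lambda$ with $\varphi\mu=\varphi$ acts transitively on each fiber. *)

theory Defs
  imports Main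
begin

type_synonym 'a graph = "'a set \<times> ('a \<Rightarrow> 'a \<Rightarrow> bool)"

definition verts :: "'a graph \<Rightarrow> 'a set" where "verts G = fst G"
definition adj :: "'a graph \<Rightarrow> 'a \<Rightarrow> 'a \<Rightarrow> bool" where "adj G = snd G"

definition fin_simple_graph :: "'a graph \<Rightarrow> bool" where
  "fin_simple_graph G \<longleftrightarrow> finite (verts G)
     \<and> (\<forall>x y. adj G x y \<longrightarrow> x \<in> verts G \<and> y \<in> verts G)
     \<and> (\<forall>x y. adj G x y \<longrightarrow> adj G y x)
     \<and> (\<forall>x. \<not> adj G x x)"

definition nbrs :: "'a graph \<Rightarrow> 'a \<Rightarrow> 'a set" where
  "nbrs G u = {v \<in> verts G. adj G u v}"

definition induced :: "'a graph \<Rightarrow> 'a set \<Rightarrow> 'a graph" where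
  "induced G S = (S, \<lambda>x y. x \<in> S \<and> y \<in> S \<and> adj G x y)"

definition subgraph :: "'a graph \<Rightarrow> 'a graph \<Rightarrow> bool" where
  "subgraph H G \<longleftrightarrow> verts H \<subseteq> verts G \<and> (\<forall>x y. adj H x y \<longrightarrow> adj G x y)"

definition lk :: "'a graph \<Rightarrow> 'a \<Rightarrow> 'a graph" where
  "lk G u = induced G (nbrs G u)"

definition st :: "'a graph \<Rightarrow> 'a \<Rightarrow> 'a graph" where
  "st G u = induced G (insert u (nbrs G u))"

definition isolated :: "'a graph \<Rightarrow> 'a \<Rightarrow> bool" where
  "isolated G u \<longleftrightarrow> nbrs G u = {}"

definition simplicial_map :: "'b graph \<Rightarrow> 'a graph \<Rightarrow> ('b \<Rightarrow> 'a) \<Rightarrow> bool" where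
  "simplicial_map L G f \<longleftrightarrow> (\<forall>x \<in> verts L. f x \<in> verts G)
     \<and> (\<forall>x y. adj L x y \<longrightarrow> adj G (f x) (f y) \<or> f x = f y)"

definition covering_map :: "'b graph \<Rightarrow> 'a graph \<Rightarrow> ('b \<Rightarrow> 'a) \<Rightarrow> bool" where
  "covering_map L G f \<longleftrightarrow> simplicial_map L G f \<and> f ` verts L = verts G
     \<and> (\<forall>u \<in> verts L. bij_betw f (nbrs L u) (nbrs G (f u)))"

definition graph_aut :: "'b graph \<Rightarrow> ('b \<Rightarrow> 'b) \<Rightarrow> bool" where
  "graph_aut L m \<longleftrightarrow> bij_betw m (verts L) (verts L)
     \<and> (\<forall>x \<in> verts L. \<forall>y \<in> verts L. adj L x y \<longleftrightarrow> adj L (m x) (m y))"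

definition deck_group :: "'b graph \<Rightarrow> ('b \<Rightarrow> 'a) \<Rightarrow> ('b \<Rightarrow> 'b) set" where
  "deck_group L f = {m. graph_aut L m \<and> (\<forall>x \<in> verts L. f (m x) = f x)}"

definition regular_covering :: "'b graph \<Rightarrow> 'a graph \<Rightarrow> ('b \<Rightarrow> 'a) \<Rightarrow> bool" where
  "regular_covering L G f \<longleftrightarrow> covering_map L G f
     \<and> (\<forall>x \<in> verts L. \<forall>y \<in> verts L. f x = f y \<longrightarrow> (\<exists>m \<in> deck_group L f. m x = y))"

end

theory Submission
  imports Defs
begin

text \<open>A covering map is injective on the neighbourhood of every vertex and maps adjacent
vertices to adjacent, hence distinct, vertices. If \<open>u\<close> has a neighbour \<open>v\<close>, then \<open>v\<close> lies in
the star of \<open>u'\<close>: either \<open>v = u'\<close>, and \<open>u\<close>, \<open>u'\<close> are adjacent vertices of one fibre, or \<open>v\<close> is a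
common neighbour of the two, and injectivity on the neighbours of \<open>v\<close> forces \<open>u = u'\<close>.
Isolatedness is read off the image, so it is constant on fibres.\<close>

lemma nbrs_subset_insert_nbrs_if_subgraph_lk_st:
  assumes "subgraph (lk L u) (st L u')"
  shows "nbrs L u \<subseteq> insert u' (nbrs L u')"
  using assms by (simp add: subgraph_def lk_def st_def induced_def verts_def)

lemma nbrs_sym:
  assumes "fin_simple_graph L" and "u \<in> verts L" and "v \<in> nbrs L u"
  shows "u \<in> nbrs L v"
  using assms by (auto simp: nbrs_def fin_simple_graph_def)

lemma covering_map_bij_betw_nbrs:
  assumes "covering_map L G f" and "x \<in> verts L"
  shows "bij_betw f (nbrs L x) (nbrs G (f x))"
  using assms by (simp add: covering_map_def)

lemma covering_map_adj_imp_fibre_neq: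
  assumes "covering_map L G f" and "fin_simple_graph G"
    and "x \<in> verts L" and "y \<in> nbrs L x"
  shows "f x \<noteq> f y"
proof -
  have "f y \<in> nbrs G (f x)"
    using covering_map_bij_betw_nbrs[OF assms(1,3)] assms(4) by (rule bij_betw_apply)
  then show ?thesis
    using assms(2) by (auto simp: nbrs_def fin_simple_graph_def)
qed

lemma covering_map_common_nbr_fibre_eq:
  assumes "covering_map L G f" and "v \<in> verts L"
    and "x \<in> nbrs L v" and "y \<in> nbrs L v" and "f x = f y"
  shows "x = y"
  using covering_map_bij_betw_nbrs[OF assms(1,2)] assms(3-5)
  by (auto simp: bij_betw_def dest: inj_onD)

lemma covering_map_isolated_iff:
  assumes "covering_map L G f" and "x \<in> verts L"
  shows "isolated L x \<longleftrightarrow> nbrs G (f x) = {}"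
  using covering_map_bij_betw_nbrs[OF assms] by (auto simp: isolated_def bij_betw_def)

lemma covering_map_isolated_fibre:
  assumes "covering_map L G f" and "x \<in> verts L" and "y \<in> verts L" and "f x = f y"
  shows "isolated L x \<longleftrightarrow> isolated L y"
  using assms by (simp add: covering_map_isolated_iff)

lemma covering_map_fibre_eq_if_nbrs_in_star:
  assumes "covering_map L G f" and "fin_simple_graph L" and "fin_simple_graph G"
    and "u \<in> verts L" and "u' \<in> verts L"
    and star: "nbrs L u \<subseteq> insert u' (nbrs L u')"
    and fibre: "f u = f u'" and "\<not> isolated L u"
  shows "u = u'"
proof -
  obtain v where v: "v \<in> nbrs L u"
    using \<open>\<not> isolated L u\<close> by (auto simp: isolated_def)
  have "v \<noteq> u'"
    using covering_map_adj_imp_fibre_neq[OF assms(1,3,4) v] fibre by blast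
  then have "v \<in> nbrs L u'"
    using v star by blast
  moreover have "v \<in> verts L"
    using v by (simp add: nbrs_def)
  ultimately show "u = u'"
    using covering_map_common_nbr_fibre_eq[OF assms(1)] nbrs_sym[OF assms(2)] assms(4,5) v fibre
    by blast
qed

theorem lemma3p2:
  fixes L :: "'b graph" and G :: "'a graph" and f :: "'b \<Rightarrow> 'a" and u u' :: 'b
  assumes "fin_simple_graph L" and "fin_simple_graph G"
    and "regular_covering L G f"
    and "u \<in> verts L" and "u' \<in> verts L"
    and "subgraph (lk L u) (st L u')"
    and "f u = f u'"
  shows "(\<not> isolated L u \<longrightarrow> u = u') \<and> (isolated L u \<longrightarrow> isolated L u')"
proof -
  have cov: "covering_map L G f"
    using assms(3) by (simp add: regular_covering_def)
  have star: "nbrs L u \<subseteq> insert u' (nbrs L u')"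
    using assms(6) by (rule nbrs_subset_insert_nbrs_if_subgraph_lk_st)
  show ?thesis
    using covering_map_fibre_eq_if_nbrs_in_star[OF cov assms(1,2,4,5) star assms(7)]
      covering_map_isolated_fibre[OF cov assms(4,5,7)]
    by blast
qed

end
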